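(* Let $X$ be an unbounded connected coarse space. The following are equivalent: (1) $X$ is thin; (2) the coarse hyperspace $\mathcal{M}'\text{-}\exp X$ is connected, where $\mathcal{M}'(X)$ is the family of all non-empty meshy subsets of $X$; (3) the map $c_X\colon X\to\exp X$, $c_X(x)=X\setminus\{x\}$, is an asymorphic embedding.
   Context: Coarse structure $\mathcal{C}_X$: family of subsets of $X\times X$ containing the diagonal, closed under subsets, finite unions, inverses, compositions; connected if every singleton $\{(x,y)\}$ is controlled; bounded sets: $B$ with $B\times B\in\mathcal{C}_X$. $A\subseteq X$ is meshy if $\{x\in X:E[x]\subseteq A\}=\varnothing$ for some $E\in\mathcal{C}_X$. $X$ is thin if for every $E\in\mathcal{C}_X$ there is a bounded $B$ with $E[x]\cap E[y]=\varnothing$ for all distinct $x,y\in X\setminus B$. $\exp E=\{(A,B)\in\mathcal{P}(X)^2:A\subseteq E[B],\ B\subseteq E[A]\}$; $\exp X$ is $\mathcal{P}(X)$ with the coarse structure generated by $\{\exp E:E\in\mathcal{C}_X\}$; for $\mathcal{A}(X)\subseteq\mathcal{P}(X)$, $\mathcal{A}\text{-}\exp X$ is the subspace $\mathcal{A}(X)$ with restricted coarse structure. An asymorphic embedding is an injective map that is a bornologous bijection onto its image with bornologous inverse (bornologous: images of controlled sets under $f\times f$ are controlled). *)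

theory Defs
  imports Main
begin

definition coarse_structure :: "'a set \<Rightarrow> ('a \<times> 'a) set set \<Rightarrow> bool" where
  "coarse_structure X C \<longleftrightarrow>
     (\<forall>E\<in>C. E \<subseteq> X \<times> X) \<and>
     Id_on X \<in> C \<and>
     (\<forall>E\<in>C. \<forall>F. F \<subseteq> E \<longrightarrow> F \<in> C) \<and>
     (\<forall>E\<in>C. \<forall>F\<in>C. E \<union> F \<in> C) \<and>
     (\<forall>E\<in>C. E\<inverse> \<in> C) \<and>
     (\<forall>E\<in>C. \<forall>F\<in>C. E O F \<in> C)"

definition coarse_connected :: "'a set \<Rightarrow> ('a \<times> 'a) set set \<Rightarrow> bool" where
  "coarse_connected X C \<longleftrightarrow> (\<forall>x\<in>X. \<forall>y\<in>X. {(x, y)} \<in> C)"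

definition cbounded :: "'a set \<Rightarrow> ('a \<times> 'a) set set \<Rightarrow> 'a set \<Rightarrow> bool" where
  "cbounded X C B \<longleftrightarrow> B \<subseteq> X \<and> B \<times> B \<in> C"

definition meshy :: "'a set \<Rightarrow> ('a \<times> 'a) set set \<Rightarrow> 'a set \<Rightarrow> bool" where
  "meshy X C A \<longleftrightarrow> A \<subseteq> X \<and> (\<exists>E\<in>C. {x\<in>X. E `` {x} \<subseteq> A} = {})"

definition thin :: "'a set \<Rightarrow> ('a \<times> 'a) set set \<Rightarrow> bool" where
  "thin X C \<longleftrightarrow> (\<forall>E\<in>C. \<exists>B. cbounded X C B \<and>
      (\<forall>x\<in>X - B. \<forall>y\<in>X - B. x \<noteq> y \<longrightarrow> E `` {x} \<inter> E `` {y} = {}))"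

definition coarse_generated :: "'a set \<Rightarrow> ('a \<times> 'a) set set \<Rightarrow> ('a \<times> 'a) set set" where
  "coarse_generated S G = \<Inter>{D. coarse_structure S D \<and> G \<subseteq> D}"

definition expE :: "'a set \<Rightarrow> ('a \<times> 'a) set \<Rightarrow> ('a set \<times> 'a set) set" where
  "expE X E = {(A, B). A \<subseteq> X \<and> B \<subseteq> X \<and> A \<subseteq> E `` B \<and> B \<subseteq> E `` A}"

definition exp_coarse :: "'a set \<Rightarrow> ('a \<times> 'a) set set \<Rightarrow> ('a set \<times> 'a set) set set" where
  "exp_coarse X C = coarse_generated (Pow X) (expE X ` C)"

definition subspace_coarse :: "('a \<times> 'a) set set \<Rightarrow> 'a set \<Rightarrow> ('a \<times> 'a) set set" where
  "subspace_coarse C Y = {E \<in> C. E \<subseteq> Y \<times> Y}"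

definition meshy_family :: "'a set \<Rightarrow> ('a \<times> 'a) set set \<Rightarrow> 'a set set" where
  "meshy_family X C = {A. A \<noteq> {} \<and> meshy X C A}"

definition bornologous :: "'a set \<Rightarrow> ('a \<times> 'a) set set \<Rightarrow> ('b \<times> 'b) set set \<Rightarrow> ('a \<Rightarrow> 'b) \<Rightarrow> bool" where
  "bornologous X C D f \<longleftrightarrow> (\<forall>E\<in>C. (\<lambda>(x, y). (f x, f y)) ` E \<in> D)"

definition asymorphic_embedding ::
  "'a set \<Rightarrow> ('a \<times> 'a) set set \<Rightarrow> 'b set \<Rightarrow> ('b \<times> 'b) set set \<Rightarrow> ('a \<Rightarrow> 'b) \<Rightarrow> bool" where
  "asymorphic_embedding X C Y D f \<longleftrightarrow>
     f ` X \<subseteq> Y \<and> inj_on f X \<and> bornologous X C D f \<and>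
     (\<forall>F\<in>subspace_coarse D (f ` X).
        (\<lambda>(u, v). (the_inv_into X f u, the_inv_into X f v)) ` F \<in> C)"

end

theory Submission imports Defs begin

text \<open>Call x displaced by G if some point other than x is G-related to x. X is thin exactly
  when, for every controlled G, the points displaced by G form a bounded set. The complements
  X - {x} and X - {y} are close in exp X exactly when x = y or both points are displaced, so the
  complement map reflects closeness iff displaced sets are bounded. If X is thin, every meshy set
  consists of displaced points and hence is bounded, and any two non-empty bounded sets are close
  since X is connected. Conversely, for a symmetric controlled F, removing a maximal F-independent
  set from the points displaced by F leaves a meshy set whose F-neighbourhood contains every
  displaced point; its closeness to a singleton makes it, and hence all displaced points, bounded.\<close>

definition displaced :: "'a set \<Rightarrow> ('a \<times> 'a) set \<Rightarrow> 'a set" where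
  "displaced X G = {x\<in>X. \<exists>w\<in>X. w \<noteq> x \<and> (w, x) \<in> G}"

lemma displaced_subset: "displaced X G \<subseteq> X"
  unfolding displaced_def by blast

lemma displaced_mono: "G \<subseteq> H \<Longrightarrow> displaced X G \<subseteq> displaced X H"
  unfolding displaced_def by blast

lemma expE_mono: "G \<subseteq> H \<Longrightarrow> expE X G \<subseteq> expE X H"
  unfolding expE_def by blast

lemma expE_converse: "(expE X G)\<inverse> = expE X G"
  unfolding expE_def by blast

lemma expE_relcomp: "expE X G O expE X G \<subseteq> expE X (G O G)"
proof
  fix p assume "p \<in> expE X G O expE X G"
  then obtain A B D where "p = (A, D)" "(A, B) \<in> expE X G" "(B, D) \<in> expE X G"
    by blast
  then have "A \<subseteq> X" "D \<subseteq> X" "A \<subseteq> G `` B" "B \<subseteq> G `` D" "D \<subseteq> G `` B" "B \<subseteq> G `` A"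
    unfolding expE_def by auto
  then have "A \<subseteq> G `` (G `` D)" "D \<subseteq> G `` (G `` A)"
    using Image_mono[OF order_refl, of B _ G] by (meson subset_trans)+
  with \<open>A \<subseteq> X\<close> \<open>D \<subseteq> X\<close> show "p \<in> expE X (G O G)"
    unfolding expE_def relcomp_Image \<open>p = (A, D)\<close> by blast
qed

lemma Id_on_Pow_subset_expE: "Id_on (Pow X) \<subseteq> expE X (Id_on X)"
  unfolding expE_def by blast

lemma complements_in_expE_iff:
  assumes "Id_on X \<subseteq> G" "x \<in> X" "y \<in> X"
  shows "(X - {x}, X - {y}) \<in> expE X G \<longleftrightarrow>
           x = y \<or> (x \<in> displaced X G \<and> y \<in> displaced X G)"
  using assms unfolding expE_def displaced_def by blast

lemma image_the_inv_into_pairs: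
  assumes "inj_on f X" "F \<subseteq> f ` X \<times> f ` X"
  shows "(\<lambda>(u, v). (the_inv_into X f u, the_inv_into X f v)) ` F
           = {(x, y) \<in> X \<times> X. (f x, f y) \<in> F}"
proof (intro equalityI subsetI)
  fix p assume "p \<in> (\<lambda>(u, v). (the_inv_into X f u, the_inv_into X f v)) ` F"
  then obtain x y where "x \<in> X" "y \<in> X" "(f x, f y) \<in> F" "p = (x, y)"
    using assms by (auto simp: the_inv_into_f_f)
  then show "p \<in> {(x, y) \<in> X \<times> X. (f x, f y) \<in> F}" by blast
next
  fix p assume "p \<in> {(x, y) \<in> X \<times> X. (f x, f y) \<in> F}"
  then obtain x y where "x \<in> X" "y \<in> X" "(f x, f y) \<in> F" "p = (x, y)" by blast
  then show "p \<in> (\<lambda>(u, v). (the_inv_into X f u, the_inv_into X f v)) ` F"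
    using assms(1) by (auto simp: the_inv_into_f_f intro!: image_eqI[of _ _ "(f x, f y)"])
qed

lemma maximal_independent_subset:
  assumes "sym R"
  obtains I where "I \<subseteq> S" "\<forall>x\<in>I. \<forall>y\<in>I. (x, y) \<in> R \<longrightarrow> x = y"
    "\<forall>y\<in>S - I. \<exists>i\<in>I. (y, i) \<in> R"
proof -
  let ?Ind = "{I. I \<subseteq> S \<and> (\<forall>x\<in>I. \<forall>y\<in>I. (x, y) \<in> R \<longrightarrow> x = y)}"
  have "\<forall>Ch\<in>chains ?Ind. \<Union>Ch \<in> ?Ind"
  proof
    fix Ch assume chain: "Ch \<in> chains ?Ind"
    have members: "I \<subseteq> S" "\<forall>x\<in>I. \<forall>y\<in>I. (x, y) \<in> R \<longrightarrow> x = y" if "I \<in> Ch" for I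
      using chainsD2[OF chain] that by blast+
    have "x = y" if "x \<in> I" "y \<in> J" "I \<in> Ch" "J \<in> Ch" "(x, y) \<in> R" for x y I J
      using chainsD[OF chain that(3,4)] members(2)[OF that(3)] members(2)[OF that(4)] that(1,2,5)
      by blast
    moreover have "\<Union>Ch \<subseteq> S"
      using members(1) by blast
    ultimately show "\<Union>Ch \<in> ?Ind"
      by (intro CollectI conjI ballI impI) (auto elim!: UnionE)
  qed
  from Zorn_Lemma[OF this] obtain I where I: "I \<in> ?Ind" and max: "\<forall>J\<in>?Ind. I \<subseteq> J \<longrightarrow> J = I" ..
  have "\<exists>i\<in>I. (y, i) \<in> R" if "y \<in> S - I" for y
  proof (rule ccontr)
    assume "\<not> (\<exists>i\<in>I. (y, i) \<in> R)"
    with \<open>sym R\<close> have "insert y I \<in> ?Ind"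
      using I that by (auto dest: symD)
    then have "insert y I = I"
      using max[rule_format] by blast
    with that show False by blast
  qed
  with I that show ?thesis by blast
qed

lemma displaced_subset_Image_diff_independent:
  assumes "sym F" "I \<subseteq> displaced X F" and independent: "\<forall>x\<in>I. \<forall>y\<in>I. (x, y) \<in> F \<longrightarrow> x = y"
  shows "displaced X F \<subseteq> (F \<union> Id_on X) `` (displaced X F - I)"
proof
  fix x assume x: "x \<in> displaced X F"
  then have "x \<in> X" by (rule subsetD[OF displaced_subset])
  show "x \<in> (F \<union> Id_on X) `` (displaced X F - I)"
  proof (cases "x \<in> I")
    case False
    with x \<open>x \<in> X\<close> show ?thesis by blast
  next
    case True
    from x obtain w where "w \<in> X" "w \<noteq> x" "(w, x) \<in> F"
      unfolding displaced_def by auto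
    \<comment> \<open>By symmetry of F the predecessor w is itself displaced, and independence keeps it out of I.\<close>
    moreover have "(x, w) \<in> F" using \<open>sym F\<close> \<open>(w, x) \<in> F\<close> by (rule symD)
    ultimately have "w \<in> displaced X F" "w \<notin> I"
      using \<open>x \<in> X\<close> independent True unfolding displaced_def by auto
    with \<open>(w, x) \<in> F\<close> show ?thesis by blast
  qed
qed

locale coarse_space =
  fixes X :: "'a set" and C :: "('a \<times> 'a) set set"
  assumes coarse_structure: "coarse_structure X C"
begin

lemma controlled_subset: "E \<in> C \<Longrightarrow> E \<subseteq> X \<times> X"
  using coarse_structure unfolding coarse_structure_def by simp

lemma Id_on_controlled: "Id_on X \<in> C"
  using coarse_structure unfolding coarse_structure_def by simp

lemma controlled_mono: "E \<in> C \<Longrightarrow> F \<subseteq> E \<Longrightarrow> F \<in> C"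
  using coarse_structure unfolding coarse_structure_def by simp

lemma controlled_Un: "E \<in> C \<Longrightarrow> F \<in> C \<Longrightarrow> E \<union> F \<in> C"
  using coarse_structure unfolding coarse_structure_def by simp

lemma controlled_converse: "E \<in> C \<Longrightarrow> E\<inverse> \<in> C"
  using coarse_structure unfolding coarse_structure_def by simp

lemma controlled_relcomp: "E \<in> C \<Longrightarrow> F \<in> C \<Longrightarrow> E O F \<in> C"
  using coarse_structure unfolding coarse_structure_def by simp

lemma cbounded_empty: "cbounded X C {}"
  unfolding cbounded_def using controlled_mono[OF Id_on_controlled] by simp

lemma cbounded_singleton: "x \<in> X \<Longrightarrow> cbounded X C {x}"
  unfolding cbounded_def using controlled_mono[OF Id_on_controlled, of "{x} \<times> {x}"] by auto

lemma cbounded_subset: "cbounded X C B \<Longrightarrow> A \<subseteq> B \<Longrightarrow> cbounded X C A"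
  unfolding cbounded_def by (meson Sigma_mono controlled_mono order_trans)

lemma cbounded_Image:
  assumes "cbounded X C B" "G \<in> C"
  shows "cbounded X C (G `` B)"
proof -
  have "G\<inverse> O (B \<times> B) O G \<in> C"
    using assms unfolding cbounded_def by (intro controlled_relcomp controlled_converse) auto
  moreover have "(G `` B) \<times> (G `` B) \<subseteq> G\<inverse> O (B \<times> B) O G" by blast
  ultimately show ?thesis
    using controlled_subset[OF assms(2)] controlled_mono unfolding cbounded_def by blast
qed

lemma coarse_structure_expE_dominated:
  "coarse_structure (Pow X) {F. \<exists>G\<in>C. F \<subseteq> expE X G}" (is "coarse_structure _ ?D")
proof -
  have common_bound: "\<exists>K\<in>C. E \<subseteq> expE X K \<and> F \<subseteq> expE X K \<and> K O K \<in> C"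
    if members: "E \<in> ?D" "F \<in> ?D" for E F
  proof -
    obtain G H where "G \<in> C" "H \<in> C" "E \<subseteq> expE X G" "F \<subseteq> expE X H"
      using members by blast
    then show ?thesis
      using expE_mono[of G "G \<union> H" X] expE_mono[of H "G \<union> H" X]
      by (intro bexI[of _ "G \<union> H"]) (auto intro: controlled_Un controlled_relcomp)
  qed
  show ?thesis
    unfolding coarse_structure_def
  proof (intro conjI ballI allI impI)
    fix E assume "E \<in> ?D"
    then show "E \<subseteq> Pow X \<times> Pow X"
      unfolding expE_def by blast
  next
    show "Id_on (Pow X) \<in> ?D"
      using Id_on_Pow_subset_expE Id_on_controlled by blast
  next
    fix E F assume "E \<in> ?D" "F \<subseteq> E"
    then show "F \<in> ?D" by blast
  next
    fix E F assume "E \<in> ?D" "F \<in> ?D"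
    then obtain K where "K \<in> C" "E \<subseteq> expE X K" "F \<subseteq> expE X K"
      using common_bound[of E F] by blast
    then show "E \<union> F \<in> ?D" by blast
  next
    fix E assume "E \<in> ?D"
    then obtain G where "G \<in> C" "E \<subseteq> expE X G" by blast
    then have "E\<inverse> \<subseteq> expE X G"
      using converse_mono[of E "expE X G"] expE_converse[of X G] by simp
    with \<open>G \<in> C\<close> show "E\<inverse> \<in> ?D" by blast
  next
    fix E F assume "E \<in> ?D" "F \<in> ?D"
    then obtain K where "K O K \<in> C" "E \<subseteq> expE X K" "F \<subseteq> expE X K"
      using common_bound[of E F] by blast
    then show "E O F \<in> ?D"
      using expE_relcomp[of X K] by blast
  qed
qed

lemma exp_coarse_iff: "F \<in> exp_coarse X C \<longleftrightarrow> (\<exists>G\<in>C. F \<subseteq> expE X G)"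
proof
  have "exp_coarse X C \<subseteq> {F. \<exists>G\<in>C. F \<subseteq> expE X G}"
    using coarse_structure_expE_dominated
    unfolding exp_coarse_def coarse_generated_def by blast
  then show "F \<in> exp_coarse X C \<Longrightarrow> \<exists>G\<in>C. F \<subseteq> expE X G" by blast
next
  assume "\<exists>G\<in>C. F \<subseteq> expE X G"
  then obtain G where "G \<in> C" "F \<subseteq> expE X G" by blast
  show "F \<in> exp_coarse X C"
    unfolding exp_coarse_def coarse_generated_def
  proof (rule InterI)
    fix D assume "D \<in> {D. coarse_structure (Pow X) D \<and> expE X ` C \<subseteq> D}"
    then have "\<forall>E\<in>D. \<forall>F. F \<subseteq> E \<longrightarrow> F \<in> D" "expE X G \<in> D"
      unfolding coarse_structure_def using \<open>G \<in> C\<close> by auto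
    with \<open>F \<subseteq> expE X G\<close> show "F \<in> D" by blast
  qed
qed

lemma thin_iff_displaced_cbounded:
  "thin X C \<longleftrightarrow> (\<forall>G\<in>C. cbounded X C (displaced X G))"
proof
  assume thin: "thin X C"
  show "\<forall>G\<in>C. cbounded X C (displaced X G)"
  proof
    fix G assume "G \<in> C"
    let ?H = "G \<union> G\<inverse> \<union> Id_on X"
    have H: "?H \<in> C"
      using \<open>G \<in> C\<close> by (intro controlled_Un controlled_converse Id_on_controlled)
    then obtain B where B: "cbounded X C B"
      and disjoint: "\<forall>x\<in>X - B. \<forall>y\<in>X - B. x \<noteq> y \<longrightarrow> ?H `` {x} \<inter> ?H `` {y} = {}"
      using thin unfolding thin_def by blast
    \<comment> \<open>x and its G-predecessor w share the ?H-neighbour x, so one of them lies in B.\<close>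
    have "displaced X G \<subseteq> ?H `` B"
      unfolding displaced_def using disjoint by blast
    then show "cbounded X C (displaced X G)"
      using cbounded_subset cbounded_Image[OF B H] by blast
  qed
next
  assume bounded: "\<forall>G\<in>C. cbounded X C (displaced X G)"
  show "thin X C"
    unfolding thin_def
  proof
    fix E assume "E \<in> C"
    then have "cbounded X C (displaced X (E O E\<inverse>))"
      using bounded by (simp add: controlled_relcomp controlled_converse)
    moreover have "\<forall>x\<in>X - displaced X (E O E\<inverse>). \<forall>y\<in>X - displaced X (E O E\<inverse>).
        x \<noteq> y \<longrightarrow> E `` {x} \<inter> E `` {y} = {}"
      unfolding displaced_def by blast
    ultimately show "\<exists>B. cbounded X C B \<and>
        (\<forall>x\<in>X - B. \<forall>y\<in>X - B. x \<noteq> y \<longrightarrow> E `` {x} \<inter> E `` {y} = {})"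
      by blast
  qed
qed

lemma complement_map_bornologous:
  "bornologous X C (exp_coarse X C) (\<lambda>x. X - {x})"
  unfolding bornologous_def
proof
  fix E assume "E \<in> C"
  let ?G = "E \<union> E\<inverse> \<union> Id_on X"
  have "?G \<in> C"
    using \<open>E \<in> C\<close> by (intro controlled_Un controlled_converse Id_on_controlled)
  moreover have "(X - {x}, X - {y}) \<in> expE X ?G" if "(x, y) \<in> E" for x y
  proof -
    have "x \<in> X" "y \<in> X" using that controlled_subset[OF \<open>E \<in> C\<close>] by auto
    moreover have "x = y \<or> (x \<in> displaced X ?G \<and> y \<in> displaced X ?G)"
    proof (cases "x = y")
      case False
      moreover have "(y, x) \<in> ?G" "(x, y) \<in> ?G" using that by auto
      ultimately show ?thesis
        using \<open>x \<in> X\<close> \<open>y \<in> X\<close> unfolding displaced_def by auto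
    qed simp
    ultimately show ?thesis by (subst complements_in_expE_iff) auto
  qed
  then have "(\<lambda>(x, y). (X - {x}, X - {y})) ` E \<subseteq> expE X ?G" by auto
  ultimately show "(\<lambda>(x, y). (X - {x}, X - {y})) ` E \<in> exp_coarse X C"
    unfolding exp_coarse_iff by blast
qed

lemma complement_map_inj: "inj_on (\<lambda>x. X - {x}) X"
  unfolding inj_on_def by blast

lemma thin_imp_complement_map_embedding:
  assumes "thin X C"
  shows "asymorphic_embedding X C (Pow X) (exp_coarse X C) (\<lambda>x. X - {x})"
  unfolding asymorphic_embedding_def
proof (intro conjI complement_map_inj complement_map_bornologous ballI)
  show "(\<lambda>x. X - {x}) ` X \<subseteq> Pow X" by blast
next
  fix F assume "F \<in> subspace_coarse (exp_coarse X C) ((\<lambda>x. X - {x}) ` X)"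
  then obtain G where "G \<in> C" "F \<subseteq> expE X G"
    and F_sub: "F \<subseteq> (\<lambda>x. X - {x}) ` X \<times> (\<lambda>x. X - {x}) ` X"
    unfolding subspace_coarse_def exp_coarse_iff by blast
  let ?G = "G \<union> Id_on X"
  let ?D = "displaced X ?G"
  have "?G \<in> C" using \<open>G \<in> C\<close> by (intro controlled_Un Id_on_controlled)
  then have "?D \<times> ?D \<in> C"
    using assms unfolding thin_iff_displaced_cbounded cbounded_def by blast
  moreover have "{(x, y) \<in> X \<times> X. (X - {x}, X - {y}) \<in> F} \<subseteq> Id_on X \<union> ?D \<times> ?D"
    using \<open>F \<subseteq> expE X G\<close> expE_mono[of G ?G X] complements_in_expE_iff[of X ?G] by blast
  ultimately show "(\<lambda>(u, v). (the_inv_into X (\<lambda>x. X - {x}) u,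
                              the_inv_into X (\<lambda>x. X - {x}) v)) ` F \<in> C"
    unfolding image_the_inv_into_pairs[OF complement_map_inj F_sub]
    by (meson Id_on_controlled controlled_Un controlled_mono)
qed

lemma complement_map_embedding_imp_thin:
  assumes embedding: "asymorphic_embedding X C (Pow X) (exp_coarse X C) (\<lambda>x. X - {x})"
  shows "thin X C"
  unfolding thin_iff_displaced_cbounded
proof
  fix G assume "G \<in> C"
  let ?G = "G \<union> Id_on X"
  let ?D = "displaced X ?G"
  let ?F = "(\<lambda>(x, y). (X - {x}, X - {y})) ` (?D \<times> ?D)"
  have D_sub: "?D \<subseteq> X" by (rule displaced_subset)
  have "?G \<in> C" using \<open>G \<in> C\<close> by (intro controlled_Un Id_on_controlled)
  moreover have "(X - {x}, X - {y}) \<in> expE X ?G" if "x \<in> ?D" "y \<in> ?D" for x y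
    using that D_sub by (subst complements_in_expE_iff) auto
  then have "?F \<subseteq> expE X ?G" by auto
  ultimately have "?F \<in> exp_coarse X C"
    unfolding exp_coarse_iff by blast
  moreover have F_sub: "?F \<subseteq> (\<lambda>x. X - {x}) ` X \<times> (\<lambda>x. X - {x}) ` X"
    using D_sub by auto
  ultimately have "?F \<in> subspace_coarse (exp_coarse X C) ((\<lambda>x. X - {x}) ` X)"
    unfolding subspace_coarse_def by simp
  then have "(\<lambda>(u, v). (the_inv_into X (\<lambda>x. X - {x}) u,
                         the_inv_into X (\<lambda>x. X - {x}) v)) ` ?F \<in> C"
    using embedding unfolding asymorphic_embedding_def by blast
  moreover have "{(x, y) \<in> X \<times> X. (X - {x}, X - {y}) \<in> ?F} = ?D \<times> ?D"
    using D_sub complement_map_inj unfolding inj_on_def by auto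
  ultimately have "?D \<times> ?D \<in> C"
    unfolding image_the_inv_into_pairs[OF complement_map_inj F_sub] by simp
  then have "cbounded X C ?D"
    unfolding cbounded_def using D_sub by blast
  then show "cbounded X C (displaced X G)"
    using cbounded_subset displaced_mono[of G ?G X] by blast
qed

lemma meshy_subset_displaced:
  assumes "meshy X C A"
  obtains E where "E \<in> C" "A \<subseteq> displaced X E"
proof -
  obtain E where "E \<in> C" "{x\<in>X. E `` {x} \<subseteq> A} = {}" "A \<subseteq> X"
    using assms unfolding meshy_def by blast
  have "A \<subseteq> displaced X (E\<inverse>)"
  proof
    fix x assume "x \<in> A"
    with \<open>{x\<in>X. E `` {x} \<subseteq> A} = {}\<close> \<open>A \<subseteq> X\<close>
    obtain z where "(x, z) \<in> E" "z \<notin> A" by blast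
    with \<open>x \<in> A\<close> \<open>A \<subseteq> X\<close> controlled_subset[OF \<open>E \<in> C\<close>]
    show "x \<in> displaced X (E\<inverse>)" unfolding displaced_def by auto
  qed
  with \<open>E \<in> C\<close> controlled_converse that show ?thesis by blast
qed

lemma thin_imp_meshy_hyperspace_connected:
  assumes "thin X C" and connected: "coarse_connected X C"
  shows "coarse_connected (meshy_family X C)
           (subspace_coarse (exp_coarse X C) (meshy_family X C))"
  unfolding coarse_connected_def
proof (intro ballI)
  fix A B assume "A \<in> meshy_family X C" "B \<in> meshy_family X C"
  then have "meshy X C A" "meshy X C B" "A \<noteq> {}" "B \<noteq> {}"
    unfolding meshy_family_def by auto
  then have "A \<times> A \<in> C" "B \<times> B \<in> C" "A \<subseteq> X" "B \<subseteq> X"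
    using assms(1) meshy_subset_displaced cbounded_subset
    unfolding thin_iff_displaced_cbounded cbounded_def by metis+
  obtain a b where "a \<in> A" "b \<in> B" using \<open>A \<noteq> {}\<close> \<open>B \<noteq> {}\<close> by blast
  let ?H = "(B \<times> B) O {(b, a)} O (A \<times> A)"
  have "{(b, a)} \<in> C"
    using connected \<open>a \<in> A\<close> \<open>b \<in> B\<close> \<open>A \<subseteq> X\<close> \<open>B \<subseteq> X\<close>
    unfolding coarse_connected_def by blast
  then have "?H \<union> ?H\<inverse> \<in> C"
    using \<open>A \<times> A \<in> C\<close> \<open>B \<times> B \<in> C\<close>
    by (intro controlled_Un controlled_converse controlled_relcomp)
  moreover have "{(A, B)} \<subseteq> expE X (?H \<union> ?H\<inverse>)"
    unfolding expE_def using \<open>a \<in> A\<close> \<open>b \<in> B\<close> \<open>A \<subseteq> X\<close> \<open>B \<subseteq> X\<close> by blast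
  ultimately show "{(A, B)} \<in> subspace_coarse (exp_coarse X C) (meshy_family X C)"
    unfolding subspace_coarse_def exp_coarse_iff
    using \<open>A \<in> meshy_family X C\<close> \<open>B \<in> meshy_family X C\<close> by blast
qed

lemma meshy_singleton:
  assumes connected: "coarse_connected X C" and unbounded: "\<not> cbounded X C X"
    and "x \<in> X"
  shows "meshy X C {x}"
proof -
  obtain y where "y \<in> X" "y \<noteq> x"
    using unbounded cbounded_subset[OF cbounded_singleton[OF \<open>x \<in> X\<close>]] by blast
  then have "{(x, y)} \<in> C"
    using connected \<open>x \<in> X\<close> unfolding coarse_connected_def by blast
  then have "Id_on X \<union> {(x, y)} \<in> C"
    by (rule controlled_Un[OF Id_on_controlled])
  moreover have "{z\<in>X. (Id_on X \<union> {(x, y)}) `` {z} \<subseteq> {x}} = {}"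
    using \<open>y \<noteq> x\<close> by auto
  ultimately show ?thesis
    unfolding meshy_def using \<open>x \<in> X\<close> by blast
qed

lemma meshy_cbounded_if_hyperspace_connected:
  assumes "coarse_connected X C" "\<not> cbounded X C X"
    and connected: "coarse_connected (meshy_family X C)
                      (subspace_coarse (exp_coarse X C) (meshy_family X C))"
    and "meshy X C A"
  shows "cbounded X C A"
proof (cases "A = {}")
  case True then show ?thesis by (simp add: cbounded_empty)
next
  case False
  then obtain a where "a \<in> A" "a \<in> X" using \<open>meshy X C A\<close> unfolding meshy_def by blast
  then have "{(A, {a})} \<in> exp_coarse X C"
    using connected meshy_singleton[OF assms(1,2)] \<open>meshy X C A\<close> False
    unfolding coarse_connected_def subspace_coarse_def meshy_family_def by blast
  then obtain H where "H \<in> C" "A \<subseteq> H `` {a}"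
    unfolding exp_coarse_iff expE_def by blast
  then show ?thesis
    using cbounded_subset cbounded_Image cbounded_singleton[OF \<open>a \<in> X\<close>] by blast
qed

lemma meshy_diff_dominating_set:
  assumes "F \<in> C" and dominating: "\<forall>y\<in>displaced X F - I. \<exists>i\<in>I. (y, i) \<in> F"
  shows "meshy X C (displaced X F - I)"
proof -
  have "F \<union> Id_on X \<in> C"
    using \<open>F \<in> C\<close> by (intro controlled_Un Id_on_controlled)
  moreover have "{x\<in>X. (F \<union> Id_on X) `` {x} \<subseteq> displaced X F - I} = {}"
  proof (rule equals0I)
    fix x assume "x \<in> {x\<in>X. (F \<union> Id_on X) `` {x} \<subseteq> displaced X F - I}"
    then have nbhd: "(F \<union> Id_on X) `` {x} \<subseteq> displaced X F - I" and "x \<in> X" by auto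
    then have "x \<in> displaced X F - I" by blast
    with dominating obtain i where "i \<in> I" "(x, i) \<in> F" by blast
    with nbhd show False by blast
  qed
  moreover have "displaced X F - I \<subseteq> X"
    using displaced_subset[of X F] by (rule subset_trans[OF Diff_subset])
  ultimately show ?thesis
    unfolding meshy_def by blast
qed

lemma meshy_hyperspace_connected_imp_thin:
  assumes "coarse_connected X C" "\<not> cbounded X C X"
    and "coarse_connected (meshy_family X C)
           (subspace_coarse (exp_coarse X C) (meshy_family X C))"
  shows "thin X C"
  unfolding thin_iff_displaced_cbounded
proof
  fix G assume "G \<in> C"
  define F where "F = G \<union> G\<inverse>"
  have "F \<in> C"
    using \<open>G \<in> C\<close> unfolding F_def by (intro controlled_Un controlled_converse)
  then have "F \<union> Id_on X \<in> C"
    using Id_on_controlled by (rule controlled_Un)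
  have "sym F" unfolding F_def sym_def by blast
  then obtain I where "I \<subseteq> displaced X F"
    and independent: "\<forall>x\<in>I. \<forall>y\<in>I. (x, y) \<in> F \<longrightarrow> x = y"
    and dominating: "\<forall>y\<in>displaced X F - I. \<exists>i\<in>I. (y, i) \<in> F"
    using maximal_independent_subset by blast
  have "cbounded X C (displaced X F - I)"
    using meshy_cbounded_if_hyperspace_connected[OF assms]
      meshy_diff_dominating_set[OF \<open>F \<in> C\<close> dominating] by blast
  then have "cbounded X C (displaced X F)"
    using displaced_subset_Image_diff_independent[OF \<open>sym F\<close> \<open>I \<subseteq> displaced X F\<close> independent]
      cbounded_subset cbounded_Image[OF _ \<open>F \<union> Id_on X \<in> C\<close>] by blast
  then show "cbounded X C (displaced X G)"
    using cbounded_subset displaced_mono[of G F X] unfolding F_def by blast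
qed

end

theorem mainTheorem20:
  fixes X :: "'a set" and C :: "('a \<times> 'a) set set"
  assumes "coarse_structure X C"
    and "coarse_connected X C"
    and "\<not> cbounded X C X"
  shows "(thin X C \<longleftrightarrow>
            coarse_connected (meshy_family X C)
              (subspace_coarse (exp_coarse X C) (meshy_family X C)))
       \<and> (thin X C \<longleftrightarrow>
            asymorphic_embedding X C (Pow X) (exp_coarse X C) (\<lambda>x. X - {x}))"
proof -
  interpret coarse_space X C using assms(1) by unfold_locales
  show ?thesis
    using thin_imp_meshy_hyperspace_connected meshy_hyperspace_connected_imp_thin
      thin_imp_complement_map_embedding complement_map_embedding_imp_thin assms(2,3)
    by blast
qed

end
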